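(* Let $H = \{h_0 = 0_H, h_1, \dots, h_{t-1}\}$ be a finite abelian group with a fixed enumeration of its elements, and let $\boldsymbol{\lambda} = (\lambda_0,\dots,\lambda_{t-1})$ be a sequence of nonnegative integers. Suppose that for infinitely many primes $p$, every non-zero sum subset of type $\boldsymbol{\lambda}$ of $(\mathbb{Z}_p \times H) \setminus \{0_{\mathbb{Z}_p\times H}\}$ is sequenceable. Then for every torsion-free abelian group $G$, every non-zero sum subset of type $\boldsymbol{\lambda}$ of $(G \times H) \setminus \{0_{G\times H}\}$ is sequenceable.
   Context: For a finite subset $S$ of an abelian group with $|S| = k$, an ordering $(x_1,\dots,x_k)$ of $S$ has partial sums $(y_0,\dots,y_k)$ with $y_0 = 0$, $y_i = x_1+\cdots+x_i$. It is a sequencing if the $y_i$ are pairwise distinct, and a rotational sequencing if they are pairwise distinct except that $y_k = y_0 = 0$; $S$ is sequenceable if it has one or the other. $S$ is non-zero sum if the sum of its elements is nonzero. For an abelian group $G$ and a finite abelian group $H = \{h_0=0_H,\dots,h_{t-1}\}$, the type of a finite subset $S \subseteq G \times H$ is $(\lambda_0,\dots,\lambda_{t-1})$ where $\lambda_i$ is the number of elements of $S$ whose $H$-coordinate equals $h_i$. *)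

theory Defs
  imports Main "HOL-Library.Product_Plus" "HOL-Computational_Algebra.Primes"
begin

definition psum :: "('a \<Rightarrow> 'a \<Rightarrow> 'a) \<Rightarrow> 'a \<Rightarrow> 'a list \<Rightarrow> nat \<Rightarrow> 'a" where
  "psum add z xs i = foldl add z (take i xs)"

definition is_sequencing :: "('a \<Rightarrow> 'a \<Rightarrow> 'a) \<Rightarrow> 'a \<Rightarrow> 'a list \<Rightarrow> bool" where
  "is_sequencing add z xs \<longleftrightarrow> inj_on (psum add z xs) {0..length xs}"

definition is_rot_sequencing :: "('a \<Rightarrow> 'a \<Rightarrow> 'a) \<Rightarrow> 'a \<Rightarrow> 'a list \<Rightarrow> bool" where
  "is_rot_sequencing add z xs \<longleftrightarrow>
     inj_on (psum add z xs) {0..<length xs} \<and> psum add z xs (length xs) = z"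

definition sequenceable_wrt :: "('a \<Rightarrow> 'a \<Rightarrow> 'a) \<Rightarrow> 'a \<Rightarrow> 'a set \<Rightarrow> bool" where
  "sequenceable_wrt add z S \<longleftrightarrow>
     (\<exists>xs. distinct xs \<and> set xs = S \<and> (is_sequencing add z xs \<or> is_rot_sequencing add z xs))"

definition has_type :: "nat \<Rightarrow> (nat \<Rightarrow> 'h) \<Rightarrow> (nat \<Rightarrow> nat) \<Rightarrow> ('g \<times> 'h) set \<Rightarrow> bool" where
  "has_type t e lam S \<longleftrightarrow> (\<forall>i<t. card {x \<in> S. snd x = e i} = lam i)"

text \<open>Addition in \<open>\<int>_p \<times> H\<close>, with \<open>\<int>_p\<close> represented by \<open>{0..<p}\<close> inside \<open>int\<close>.\<close>

definition addZpH :: "nat \<Rightarrow> int \<times> 'h::ab_group_add \<Rightarrow> int \<times> 'h \<Rightarrow> int \<times> 'h" where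
  "addZpH p a b = ((fst a + fst b) mod int p, snd a + snd b)"

definition sumZpH :: "nat \<Rightarrow> (int \<times> 'h::ab_group_add) set \<Rightarrow> int \<times> 'h" where
  "sumZpH p S = ((\<Sum>x\<in>S. fst x) mod int p, \<Sum>x\<in>S. snd x)"

definition torsion_free :: "'g::ab_group_add itself \<Rightarrow> bool" where
  "torsion_free _ \<longleftrightarrow> (\<forall>(x::'g) (n::nat). 0 < n \<longrightarrow> (\<Sum>i<n. x) = 0 \<longrightarrow> x = 0)"

end

theory Submission
  imports Defs "HOL-Library.Infinite_Set"
begin

(* A torsion-free abelian group looks like \<int> to finitely many linear relations: for a finite
   S \<subseteq> G \<times> H there are integers b z (z \<in> S) with \<Sum>\<^sub>U fst = \<Sum>\<^sub>V fst iff \<Sum>\<^sub>U b = \<Sum>\<^sub>V b for all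
   U, V \<subseteq> S. They are chosen one element at a time: an element rationally dependent on the
   previous ones is eliminated by clearing the denominator, an independent one gets a value
   exceeding every relation it could occur in. Reduction modulo any p > 2 \<Sum>\<^sub>S |b| keeps these
   equalities, so z \<mapsto> (b z mod p, snd z) identifies the subset sums of S with those of a subset
   of \<int>\<^sub>p \<times> H of the same type and nonzero sum. A sequencing of that subset pulls back to S;
   a rotational one is impossible because the total sum is nonzero. *)

fun nmult :: "nat \<Rightarrow> 'a::ab_group_add \<Rightarrow> 'a" where
  "nmult 0 x = 0"
| "nmult (Suc n) x = x + nmult n x"

lemma nmult_add_left: "nmult (m + n) x = nmult m x + nmult n x"
  by (induction m) (simp_all add: add.assoc)

lemma nmult_add_right: "nmult n (x + y) = nmult n x + nmult n y"
  by (induction n) (simp_all add: algebra_simps)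

lemma nmult_diff_right: "nmult n (x - y) = nmult n x - nmult n y"
proof -
  have "nmult n (- y) = - nmult n y" by (induction n) simp_all
  then show ?thesis using nmult_add_right[of n x "- y"] by simp
qed

lemma nmult_mult: "nmult (m * n) x = nmult m (nmult n x)"
  by (induction m) (simp_all add: nmult_add_left nmult_add_right)

lemma nmult_eq_sum: "nmult n x = (\<Sum>i<n. x)"
  by (induction n) (simp_all add: add.commute)

(* The type classes of HOL provide integer multiples only in rings, as of_int k * x. *)

definition zmult :: "int \<Rightarrow> 'a::ab_group_add \<Rightarrow> 'a" where
  "zmult k x = (if 0 \<le> k then nmult (nat k) x else - nmult (nat (- k)) x)"

lemma zmult_of_nat_diff: "zmult (int a - int b) x = nmult a x - nmult b x"
proof (cases "b \<le> a")
  case True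
  then have "nmult a x = nmult (a - b) x + nmult b x"
    by (simp add: nmult_add_left[symmetric])
  moreover have "nat (int a - int b) = a - b" by simp
  ultimately show ?thesis using True by (simp add: zmult_def)
next
  case False
  then have "nmult b x = nmult (b - a) x + nmult a x"
    by (simp add: nmult_add_left[symmetric])
  moreover have "nat (- (int a - int b)) = b - a" using False by simp
  ultimately show ?thesis using False by (simp add: zmult_def)
qed

lemma zmult_add_left: "zmult (k + l) x = zmult k x + zmult l x"
proof -
  obtain a b c d where k: "k = int a - int b" and l: "l = int c - int d"
    by (meson int_diff_cases)
  have kl: "k + l = int (a + c) - int (b + d)" using k l by simp
  show ?thesis
    unfolding kl unfolding k l
    by (simp only: zmult_of_nat_diff nmult_add_left) (simp add: algebra_simps)
qed

lemma zmult_mult: "zmult (k * l) x = zmult k (zmult l x)"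
proof -
  obtain a b c d where k: "k = int a - int b" and l: "l = int c - int d"
    by (meson int_diff_cases)
  have kl: "k * l = int (a * c + b * d) - int (a * d + b * c)"
    unfolding k l by (simp add: algebra_simps)
  show ?thesis
    unfolding kl unfolding k l
    by (simp only: zmult_of_nat_diff nmult_add_left nmult_diff_right nmult_mult)
      (simp add: algebra_simps)
qed

lemma zmult_add_right: "zmult k (x + y) = zmult k x + zmult k y"
  by (simp add: zmult_def nmult_add_right)

lemma zmult_0_left [simp]: "zmult 0 x = 0"
  and zmult_1_left [simp]: "zmult 1 x = x"
  and zmult_0_right [simp]: "zmult k 0 = 0"
  by (simp_all add: zmult_def nmult_eq_sum)

lemma zmult_uminus_left: "zmult (- k) x = - zmult k x"
  using zmult_add_left[of "- k" k x] by (simp add: eq_neg_iff_add_eq_0)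

lemma zmult_diff_left: "zmult (k - l) x = zmult k x - zmult l x"
  using zmult_add_left[of k "- l" x] by (simp add: zmult_uminus_left)

lemma zmult_sum_right: "zmult k (sum f I) = (\<Sum>i\<in>I. zmult k (f i))"
  by (induction I rule: infinite_finite_induct) (simp_all add: zmult_add_right)

lemma torsion_free_zmult_eq_0_iff:
  assumes "torsion_free TYPE('a::ab_group_add)" and "k \<noteq> 0"
  shows "zmult k (x::'a) = 0 \<longleftrightarrow> x = 0"
proof
  assume "zmult k x = 0"
  then have "(\<Sum>i<nat \<bar>k\<bar>. x) = 0" and "0 < nat \<bar>k\<bar>"
    using \<open>k \<noteq> 0\<close> by (auto simp: zmult_def nmult_eq_sum split: if_splits)
  then show "x = 0" using assms(1) unfolding torsion_free_def by blast
qed simp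

definition same_relations_on ::
    "('i \<Rightarrow> 'a::ab_group_add) \<Rightarrow> ('i \<Rightarrow> int) \<Rightarrow> 'i set \<Rightarrow> ('i \<Rightarrow> int) set \<Rightarrow> bool"
  where "same_relations_on a b I C \<longleftrightarrow>
    (\<forall>c\<in>C. (\<Sum>i\<in>I. zmult (c i) (a i)) = 0 \<longleftrightarrow> (\<Sum>i\<in>I. c i * b i) = 0)"

(* Multiplying a relation c by n and substituting n a\<^sub>j = \<Sum>\<^sub>I m\<^sub>i a\<^sub>i gives the relation
   n c\<^sub>i + c\<^sub>j m\<^sub>i on I; torsion-freeness makes the two vanish together. *)
lemma same_relations_on_insert_dependent:
  assumes tf: "torsion_free TYPE('a::ab_group_add)"
    and I: "finite I" "j \<notin> I" and "n \<noteq> 0"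
    and dep: "zmult n (a j) = (\<Sum>i\<in>I. zmult (m i) (a i :: 'a))"
    and IH: "same_relations_on a b I ((\<lambda>c i. n * c i + c j * m i) ` C)"
  shows "same_relations_on a (\<lambda>i. if i = j then \<Sum>k\<in>I. m k * b k else n * b i) (insert j I) C"
  unfolding same_relations_on_def
proof
  fix c assume "c \<in> C"
  define c' where "c' i = n * c i + c j * m i" for i
  have "c' \<in> (\<lambda>c i. n * c i + c j * m i) ` C"
    using \<open>c \<in> C\<close> unfolding c'_def by blast
  with IH have IHc: "(\<Sum>i\<in>I. zmult (c' i) (a i)) = 0 \<longleftrightarrow> (\<Sum>i\<in>I. c' i * b i) = 0"
    unfolding same_relations_on_def by (rule bspec)
  have "zmult n (\<Sum>i\<in>insert j I. zmult (c i) (a i))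
      = zmult (c j) (zmult n (a j)) + (\<Sum>i\<in>I. zmult (n * c i) (a i))"
    using I by (simp add: zmult_add_right zmult_sum_right zmult_mult[symmetric] mult.commute)
  also have "\<dots> = (\<Sum>i\<in>I. zmult (c' i) (a i))"
    by (simp add: dep zmult_sum_right zmult_mult[symmetric] c'_def zmult_add_left
        sum.distrib add.commute)
  finally have lhs: "zmult n (\<Sum>i\<in>insert j I. zmult (c i) (a i)) = (\<Sum>i\<in>I. zmult (c' i) (a i))" .
  have "(\<Sum>i\<in>I. c i * (if i = j then \<Sum>k\<in>I. m k * b k else n * b i)) = (\<Sum>i\<in>I. n * c i * b i)"
    using I(2) by (intro sum.cong) auto
  then have rhs: "(\<Sum>i\<in>insert j I. c i * (if i = j then \<Sum>k\<in>I. m k * b k else n * b i))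
      = (\<Sum>i\<in>I. c' i * b i)"
    using I by (simp add: c'_def sum_distrib_left sum.distrib algebra_simps)
  show "(\<Sum>i\<in>insert j I. zmult (c i) (a i)) = 0 \<longleftrightarrow>
      (\<Sum>i\<in>insert j I. c i * (if i = j then \<Sum>k\<in>I. m k * b k else n * b i)) = 0"
    unfolding rhs IHc[symmetric] lhs[symmetric] using torsion_free_zmult_eq_0_iff[OF tf \<open>n \<noteq> 0\<close>]
    by simp
qed

lemma add_mult_large_neq_0:
  fixes r B k :: int
  assumes "\<bar>r\<bar> < B" and "k \<noteq> 0"
  shows "k * B + r \<noteq> 0"
proof -
  have "1 * B \<le> \<bar>k\<bar> * B"
    using assms by (intro mult_right_mono) auto
  then have "\<bar>r\<bar> < \<bar>k * B\<bar>" using assms(1) by (simp add: abs_mult)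
  then show ?thesis by linarith
qed

lemma same_relations_on_insert_independent:
  assumes I: "finite I" "j \<notin> I" and "finite C"
    and indep: "\<And>n m. zmult n (a j) = (\<Sum>i\<in>I. zmult (m i) (a i)) \<Longrightarrow> n = 0"
    and IH: "same_relations_on a b I C"
  shows "same_relations_on a (b(j := 1 + (\<Sum>c\<in>C. \<bar>\<Sum>i\<in>I. c i * b i\<bar>))) (insert j I) C"
proof -
  define B where "B = 1 + (\<Sum>c\<in>C. \<bar>\<Sum>i\<in>I. c i * b i\<bar>)"
  have "(\<Sum>i\<in>insert j I. zmult (c i) (a i)) = 0 \<longleftrightarrow>
      c j * B + (\<Sum>i\<in>I. c i * b i) = 0" if "c \<in> C" for c
  proof (cases "c j = 0")
    case True
    then show ?thesis using IH \<open>c \<in> C\<close> I by (simp add: same_relations_on_def)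
  next
    case False
    have "(\<Sum>i\<in>insert j I. zmult (c i) (a i)) \<noteq> 0"
    proof
      assume "(\<Sum>i\<in>insert j I. zmult (c i) (a i)) = 0"
      then have "zmult (c j) (a j) = (\<Sum>i\<in>I. zmult (- c i) (a i))"
        using I by (simp add: zmult_uminus_left sum_negf eq_neg_iff_add_eq_0)
      then show False using indep[of "c j" "\<lambda>i. - c i"] False by blast
    qed
    moreover have "\<bar>\<Sum>i\<in>I. c i * b i\<bar> < B"
      using member_le_sum[OF \<open>c \<in> C\<close>, of "\<lambda>c. \<bar>\<Sum>i\<in>I. c i * b i\<bar>"] \<open>finite C\<close>
      by (simp add: B_def)
    ultimately show ?thesis using add_mult_large_neq_0 False by blast
  qed
  moreover have "(\<Sum>i\<in>insert j I. c i * (b(j := B)) i) = c j * B + (\<Sum>i\<in>I. c i * b i)" for c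
  proof -
    have "(\<Sum>i\<in>I. c i * (b(j := B)) i) = (\<Sum>i\<in>I. c i * b i)"
      using I(2) by (intro sum.cong) auto
    then show ?thesis using I by simp
  qed
  ultimately show ?thesis unfolding same_relations_on_def B_def by simp
qed

lemma torsion_free_same_relations_on_ex:
  fixes a :: "'i \<Rightarrow> 'a::ab_group_add"
  assumes tf: "torsion_free TYPE('a)" and "finite I" and "finite C"
  shows "\<exists>b. same_relations_on a b I C"
  using \<open>finite I\<close> \<open>finite C\<close>
proof (induction I arbitrary: C rule: finite_induct)
  case empty
  then show ?case by (simp add: same_relations_on_def)
next
  case (insert j I)
  show ?case
  proof (cases "\<exists>n m. n \<noteq> 0 \<and> zmult n (a j) = (\<Sum>i\<in>I. zmult (m i) (a i))")
    case True
    then obtain n m where "n \<noteq> 0" and "zmult n (a j) = (\<Sum>i\<in>I. zmult (m i) (a i))"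
      by blast
    moreover obtain b where "same_relations_on a b I ((\<lambda>c i. n * c i + c j * m i) ` C)"
      using insert.IH insert.prems by blast
    ultimately show ?thesis
      using same_relations_on_insert_dependent[OF tf insert.hyps(1,2)] by blast
  next
    case False
    obtain b where "same_relations_on a b I C" using insert.IH insert.prems by blast
    then show ?thesis
      using same_relations_on_insert_independent[OF insert.hyps(1,2) insert.prems] False by blast
  qed
qed

lemma sum_if_mem_diff:
  assumes "finite S" "U \<subseteq> S" "V \<subseteq> S"
  shows "(\<Sum>z\<in>S. (if z \<in> U then g z else 0) - (if z \<in> V then g z else 0))
    = sum g U - (sum g V :: 'a::ab_group_add)"
  using assms by (simp add: sum_subtractf sum.inter_restrict[symmetric] Int_absorb1)

lemma torsion_free_subset_sums_in_int:
  fixes f :: "'a \<Rightarrow> 'g::ab_group_add"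
  assumes tf: "torsion_free TYPE('g)" and "finite S"
  shows "\<exists>b :: 'a \<Rightarrow> int. \<forall>U\<subseteq>S. \<forall>V\<subseteq>S. sum f U = sum f V \<longleftrightarrow> sum b U = sum b V"
proof -
  define C where "C = (\<lambda>(U, V) z. of_bool (z \<in> U) - of_bool (z \<in> V) :: int) ` (Pow S \<times> Pow S)"
  have "finite C" using \<open>finite S\<close> by (simp add: C_def)
  then obtain b where b: "same_relations_on f b S C"
    using torsion_free_same_relations_on_ex[OF tf \<open>finite S\<close>] by blast
  have "sum f U = sum f V \<longleftrightarrow> sum b U = sum b V" if "U \<subseteq> S" "V \<subseteq> S" for U V
  proof -
    have "(\<lambda>z. of_bool (z \<in> U) - of_bool (z \<in> V)) \<in> C"
      using that by (auto simp: C_def)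
    then have "(\<Sum>z\<in>S. zmult (of_bool (z \<in> U) - of_bool (z \<in> V)) (f z)) = 0 \<longleftrightarrow>
        (\<Sum>z\<in>S. (of_bool (z \<in> U) - of_bool (z \<in> V)) * b z) = 0"
      using b unfolding same_relations_on_def by (rule bspec[rotated])
    moreover have "(\<Sum>z\<in>S. zmult (of_bool (z \<in> U) - of_bool (z \<in> V)) (f z))
        = (\<Sum>z\<in>S. (if z \<in> U then f z else 0) - (if z \<in> V then f z else 0))"
      by (intro sum.cong) (simp_all add: zmult_diff_left)
    moreover have "(\<Sum>z\<in>S. (of_bool (z \<in> U) - of_bool (z \<in> V)) * b z)
        = (\<Sum>z\<in>S. (if z \<in> U then b z else 0) - (if z \<in> V then b z else 0))"
      by (intro sum.cong) (simp_all add: left_diff_distrib)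
    ultimately show ?thesis
      using sum_if_mem_diff[OF \<open>finite S\<close> that, of f] sum_if_mem_diff[OF \<open>finite S\<close> that, of b]
      by simp
  qed
  then show ?thesis by blast
qed

lemma eq_if_mod_eq_bounded:
  fixes x y M :: int
  assumes "\<bar>x\<bar> \<le> M" "\<bar>y\<bar> \<le> M" "2 * M < p" "x mod p = y mod p"
  shows "x = y"
proof (rule ccontr)
  assume "x \<noteq> y"
  moreover have "p dvd x - y" using assms(4) by (simp add: mod_eq_dvd_iff)
  ultimately have "\<bar>p\<bar> \<le> \<bar>x - y\<bar>" by (intro dvd_imp_le_int) auto
  then show False using assms(1-3) by linarith
qed

lemma sumZpH_reduction:
  fixes S :: "('g::comm_monoid_add \<times> 'h::ab_group_add) set"
  assumes "finite S"
    and b: "\<forall>U\<subseteq>S. \<forall>V\<subseteq>S. sum fst U = sum fst V \<longleftrightarrow> sum b U = sum b V"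
    and p: "2 * (\<Sum>z\<in>S. \<bar>b z\<bar>) < int p"
  defines "\<phi> \<equiv> \<lambda>z. (b z mod int p, snd z)"
  shows "inj_on \<phi> S"
    and "\<forall>U\<subseteq>S. \<forall>V\<subseteq>S. \<Sum>U = \<Sum>V \<longleftrightarrow> sumZpH p (\<phi> ` U) = sumZpH p (\<phi> ` V)"
proof -
  have bound: "\<bar>sum b U\<bar> \<le> (\<Sum>z\<in>S. \<bar>b z\<bar>)" if "U \<subseteq> S" for U
    using order_trans[OF sum_abs sum_mono2[OF \<open>finite S\<close> that]] by simp
  have sums_iff: "\<Sum>U = \<Sum>V \<longleftrightarrow> (sum b U mod int p, sum snd U) = (sum b V mod int p, sum snd V)"
    if "U \<subseteq> S" "V \<subseteq> S" for U V
    using b that eq_if_mod_eq_bounded[OF bound[OF that(1)] bound[OF that(2)] p]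
    by (auto simp: prod_eq_iff fst_sum snd_sum)
  show inj: "inj_on \<phi> S"
  proof
    fix x y assume "x \<in> S" "y \<in> S" "\<phi> x = \<phi> y"
    then show "x = y" using sums_iff[of "{x}" "{y}"] by (simp add: \<phi>_def)
  qed
  have "sumZpH p (\<phi> ` U) = (sum b U mod int p, sum snd U)" if "U \<subseteq> S" for U
    using inj_on_subset[OF inj that]
    by (simp add: sumZpH_def sum.reindex \<phi>_def mod_sum_eq)
  then show "\<forall>U\<subseteq>S. \<forall>V\<subseteq>S. \<Sum>U = \<Sum>V \<longleftrightarrow> sumZpH p (\<phi> ` U) = sumZpH p (\<phi> ` V)"
    using sums_iff by simp
qed

lemma has_type_image:
  assumes "inj_on \<phi> S" and "\<And>z. z \<in> S \<Longrightarrow> snd (\<phi> z) = snd z"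
  shows "has_type t e lam (\<phi> ` S) \<longleftrightarrow> has_type t e lam S"
proof -
  have "{x \<in> \<phi> ` S. snd x = e i} = \<phi> ` {x \<in> S. snd x = e i}" for i
    using assms(2) by auto
  moreover have "inj_on \<phi> {x \<in> S. snd x = e i}" for i
    using assms(1) by (rule inj_on_subset) auto
  ultimately show ?thesis by (simp add: has_type_def card_image)
qed

lemma foldl_plus: "foldl (+) z xs = z + sum_list (xs :: 'a::monoid_add list)"
  by (induction xs arbitrary: z) (simp_all add: add.assoc)

lemma psum_plus_distinct:
  "distinct xs \<Longrightarrow> psum (+) 0 xs i = \<Sum>(set (take i (xs :: 'a::comm_monoid_add list)))"
  by (simp add: psum_def foldl_plus sum_list_distinct_conv_sum_set[symmetric])

lemma foldl_addZpH:
  "fst a mod int p = fst a \<Longrightarrow> foldl (addZpH p) a ys = addZpH p a (sum_list ys)"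
proof (induction ys arbitrary: a)
  case Nil
  then show ?case by (simp add: addZpH_def)
next
  case (Cons y ys)
  have "fst (addZpH p a y) mod int p = fst (addZpH p a y)" by (simp add: addZpH_def)
  from Cons.IH[OF this] show ?case by (simp add: addZpH_def mod_simps add.assoc)
qed

lemma psum_addZpH_distinct:
  "distinct ys \<Longrightarrow> psum (addZpH p) (0, 0) ys i = sumZpH p (set (take i ys))"
  by (simp add: psum_def foldl_addZpH addZpH_def sumZpH_def distinct_sum_list_conv_Sum
      fst_sum snd_sum)

lemma sequenceable_wrt_pullback:
  fixes S :: "'a::comm_monoid_add set" and \<phi> :: "'a \<Rightarrow> int \<times> 'h::ab_group_add"
  assumes inj: "inj_on \<phi> S"
    and sums: "\<forall>U\<subseteq>S. \<forall>V\<subseteq>S. \<Sum>U = \<Sum>V \<longleftrightarrow> sumZpH p (\<phi> ` U) = sumZpH p (\<phi> ` V)"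
    and "\<Sum>S \<noteq> 0"
    and "sequenceable_wrt (addZpH p) (0, 0) (\<phi> ` S)"
  shows "sequenceable_wrt (+) 0 S"
proof -
  obtain ys where "distinct ys" and set_ys: "set ys = \<phi> ` S"
    and ys: "is_sequencing (addZpH p) (0, 0) ys \<or> is_rot_sequencing (addZpH p) (0, 0) ys"
    using assms(4) unfolding sequenceable_wrt_def by blast
  define xs where "xs = map (inv_into S \<phi>) ys"
  have ys_xs: "ys = map \<phi> xs"
    unfolding xs_def map_map using set_ys by (intro map_idI[symmetric]) (auto simp: f_inv_into_f)
  have "distinct xs" using \<open>distinct ys\<close> ys_xs by (simp add: distinct_map)
  have "set xs = S" using set_ys inj by (simp add: xs_def inv_into_image_cancel)
  have take_sub: "set (take i xs) \<subseteq> S" for i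
    unfolding \<open>set xs = S\<close>[symmetric] by (rule set_take_subset)
  have psum_ys: "psum (addZpH p) (0, 0) ys i = sumZpH p (\<phi> ` set (take i xs))" for i
    using psum_addZpH_distinct[OF \<open>distinct ys\<close>] by (simp add: ys_xs take_map)
  have psum_xs: "psum (+) 0 xs i = \<Sum>(set (take i xs))" for i
    using psum_plus_distinct[OF \<open>distinct xs\<close>] .
  have "length ys = length xs" by (simp add: ys_xs)
  have "sumZpH p (\<phi> ` S) \<noteq> sumZpH p (\<phi> ` {})"
    using sums[rule_format, of S "{}"] \<open>\<Sum>S \<noteq> 0\<close> by simp
  then have "psum (addZpH p) (0, 0) ys (length ys) \<noteq> (0, 0)"
    using psum_ys[of "length xs"] \<open>length ys = length xs\<close> \<open>set xs = S\<close>
    by (simp add: sumZpH_def)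
  then have seq_ys: "is_sequencing (addZpH p) (0, 0) ys"
    using ys unfolding is_rot_sequencing_def by blast
  have "is_sequencing (+) 0 xs"
    unfolding is_sequencing_def
  proof (rule inj_onI)
    fix i j assume ij: "i \<in> {0..length xs}" "j \<in> {0..length xs}"
      and "psum (+) 0 xs i = psum (+) 0 xs j"
    then have "sumZpH p (\<phi> ` set (take i xs)) = sumZpH p (\<phi> ` set (take j xs))"
      using sums[rule_format, OF take_sub take_sub] by (simp add: psum_xs)
    then have "psum (addZpH p) (0, 0) ys i = psum (addZpH p) (0, 0) ys j"
      by (simp add: psum_ys)
    then show "i = j"
      using seq_ys ij \<open>length ys = length xs\<close> unfolding is_sequencing_def by (simp add: inj_on_eq_iff)
  qed
  then show ?thesis
    unfolding sequenceable_wrt_def using \<open>distinct xs\<close> \<open>set xs = S\<close> by blast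
qed

lemma sequenceable_wrt_from_reduction:
  fixes S :: "('g::comm_monoid_add \<times> 'h::ab_group_add) set"
  assumes "finite S" and "0 \<notin> S" and "has_type t e lam S" and "\<Sum>S \<noteq> 0"
    and b: "\<forall>U\<subseteq>S. \<forall>V\<subseteq>S. sum fst U = sum fst V \<longleftrightarrow> sum b U = sum b V"
    and p: "2 * (\<Sum>z\<in>S. \<bar>b z\<bar>) < int p"
    and p_seq: "\<forall>S'. S' \<subseteq> ({0..<int p} \<times> (UNIV :: 'h set)) - {(0, 0)}
                    \<longrightarrow> has_type t e lam S'
                    \<longrightarrow> sumZpH p S' \<noteq> (0, 0)
                    \<longrightarrow> sequenceable_wrt (addZpH p) (0, 0) S'"
  shows "sequenceable_wrt (+) 0 S"
proof -
  define \<phi> where "\<phi> z = (b z mod int p, snd z)" for z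
  note reduction = sumZpH_reduction[OF \<open>finite S\<close> b p, folded \<phi>_def]
  have "(0, 0) \<notin> \<phi> ` S"
  proof
    assume "(0, 0) \<in> \<phi> ` S"
    then obtain z where "z \<in> S" and "\<phi> z = (0, 0)" by auto
    then have "sumZpH p (\<phi> ` {z}) = sumZpH p (\<phi> ` {})" by (simp add: sumZpH_def)
    then have "z = 0" using reduction(2)[rule_format, of "{z}" "{}"] \<open>z \<in> S\<close> by simp
    then show False using \<open>z \<in> S\<close> \<open>0 \<notin> S\<close> by blast
  qed
  moreover have "0 < int p" using p sum_abs_ge_zero[of b S] by linarith
  then have "\<phi> ` S \<subseteq> {0..<int p} \<times> UNIV" by (auto simp: \<phi>_def)
  ultimately have "\<phi> ` S \<subseteq> ({0..<int p} \<times> (UNIV :: 'h set)) - {(0, 0)}" by blast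
  moreover have "has_type t e lam (\<phi> ` S)"
    using has_type_image[OF reduction(1)] \<open>has_type t e lam S\<close> by (simp add: \<phi>_def)
  moreover have "sumZpH p (\<phi> ` S) \<noteq> (0, 0)"
    using reduction(2)[rule_format, of S "{}"] \<open>\<Sum>S \<noteq> 0\<close> by (simp add: sumZpH_def)
  ultimately show ?thesis
    using p_seq sequenceable_wrt_pullback[OF reduction \<open>\<Sum>S \<noteq> 0\<close>] by blast
qed

theorem theorem4p4:
  fixes e :: "nat \<Rightarrow> 'h::{ab_group_add, finite}"
    and t :: nat
    and lam :: "nat \<Rightarrow> nat"
  assumes enum: "bij_betw e {..<t} (UNIV :: 'h set)"
    and e0: "e 0 = 0"
    and hyp: "infinite {p::nat. prime p \<and>
               (\<forall>S. S \<subseteq> ({0..<int p} \<times> (UNIV :: 'h set)) - {(0, 0)}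
                    \<longrightarrow> has_type t e lam S
                    \<longrightarrow> sumZpH p S \<noteq> (0, 0)
                    \<longrightarrow> sequenceable_wrt (addZpH p) (0, 0) S)}"
    and tf: "torsion_free TYPE('g::ab_group_add)"
  shows "\<forall>S :: ('g \<times> 'h) set. finite S \<longrightarrow> S \<subseteq> UNIV - {0}
           \<longrightarrow> has_type t e lam S
           \<longrightarrow> \<Sum>S \<noteq> 0
           \<longrightarrow> sequenceable_wrt (+) 0 S"
proof (intro allI impI)
  fix S :: "('g \<times> 'h) set"
  assume "finite S" and "S \<subseteq> UNIV - {0}" and "has_type t e lam S" and "\<Sum>S \<noteq> 0"
  obtain b :: "'g \<times> 'h \<Rightarrow> int"
    where b: "\<forall>U\<subseteq>S. \<forall>V\<subseteq>S. sum fst U = sum fst V \<longleftrightarrow> sum b U = sum b V"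
    using torsion_free_subset_sums_in_int[OF tf \<open>finite S\<close>] by blast
  obtain p where "nat (2 * (\<Sum>z\<in>S. \<bar>b z\<bar>)) < p"
    and p_seq: "\<forall>S. S \<subseteq> ({0..<int p} \<times> (UNIV :: 'h set)) - {(0, 0)}
                    \<longrightarrow> has_type t e lam S
                    \<longrightarrow> sumZpH p S \<noteq> (0, 0)
                    \<longrightarrow> sequenceable_wrt (addZpH p) (0, 0) S"
    using hyp unfolding infinite_nat_iff_unbounded by blast
  then have "2 * (\<Sum>z\<in>S. \<bar>b z\<bar>) < int p" by linarith
  moreover have "0 \<notin> S" using \<open>S \<subseteq> UNIV - {0}\<close> by blast
  ultimately show "sequenceable_wrt (+) 0 S"
    using sequenceable_wrt_from_reduction[OF \<open>finite S\<close> _ \<open>has_type t e lam S\<close> \<open>\<Sum>S \<noteq> 0\<close> b]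
      p_seq by blast
qed

end
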